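(* Let $\mathbb{E}_{a,b,c}=\{(x,y,z): x^2/a^2+y^2/b^2+z^2/c^2=1\}$ be an ellipsoid with $a>b>c>0$. Then $\mathbb{E}_{a,b,c}$ has exactly four umbilic points, located in the plane $y=0$ (the plane of symmetry orthogonal to the middle axis), and each of them is of type $G_1$ for the geometric mean curvature lines and of type $D_1$ for the principal curvature lines.
   Context: An umbilic point is a point where the principal curvatures coincide. At an umbilic point choose a Monge chart $(x,y)\mapsto(x,y,h(x,y))$ centered at it with $h=\frac{k}{2}(x^2+y^2)+\frac{a}{6}x^3+\frac{b}{2}xy^2+\frac{c}{6}y^3+O(4)$ (here $a,b,c,k$ are the local coefficients, not the ellipsoid's axes). The point is of type $G_1$ if $kb(b-a)\neq0$ and $\Delta_G=4c^2(2a-b)^2-[3c^2+(a-5b)^2][3(a-5b)(a-b)+c^2]>0$. It is of type $D_1$ if $b(b-a)\neq0$ and $\Delta_P=4b(a-2b)^3-c^2(a-2b)^2>0$. Geometric mean curvature lines are curves with normal curvature equal to $\sqrt{\mathcal{K}}$, $\mathcal{K}$ the Gaussian curvature. *)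

theory Defs
  imports "HOL-Analysis.Analysis" "HOL-Library.Landau_Symbols"
begin

text \<open>Points of Euclidean 3-space are vectors of type real^3 with coordinates
  x = p$1, y = p$2, z = p$3.\<close>

definition ellipsoid :: "real \<Rightarrow> real \<Rightarrow> real \<Rightarrow> (real^3) set" where
  "ellipsoid a b c = {p. (p$1)^2/a^2 + (p$2)^2/b^2 + (p$3)^2/c^2 = 1}"

definition ell_grad :: "real \<Rightarrow> real \<Rightarrow> real \<Rightarrow> real^3 \<Rightarrow> real^3" where
  "ell_grad a b c p = (\<chi> i. if i = 1 then 2 * p$1 / a^2 else if i = 2 then 2 * p$2 / b^2
                               else 2 * p$3 / c^2)"

definition ell_normal :: "real \<Rightarrow> real \<Rightarrow> real \<Rightarrow> real^3 \<Rightarrow> real^3" where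
  "ell_normal a b c p = (1 / norm (ell_grad a b c p)) *\<^sub>R ell_grad a b c p"

text \<open>Umbilic point: the shape operator (minus the differential of the Gauss map,
  restricted to the tangent plane) has coinciding eigenvalues (principal curvatures),
  i.e. it is a scalar multiple of the identity on the tangent plane.\<close>

definition ell_umbilic :: "real \<Rightarrow> real \<Rightarrow> real \<Rightarrow> real^3 \<Rightarrow> bool" where
  "ell_umbilic a b c p \<longleftrightarrow> p \<in> ellipsoid a b c \<and>
     (\<exists>D l. (ell_normal a b c has_derivative D) (at p) \<and>
        (\<forall>v. v \<bullet> ell_normal a b c p = 0 \<longrightarrow> D v = l *\<^sub>R v))"

definition monge_chart ::
  "(real^3) set \<Rightarrow> real^3 \<Rightarrow> real^3 \<Rightarrow> real^3 \<Rightarrow> real^3 \<Rightarrow> real \<Rightarrow> real \<Rightarrow> real \<Rightarrow> real \<Rightarrow> bool"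
where
  "monge_chart S p e1 e2 N k ca cb cc \<longleftrightarrow>
     p \<in> S \<and>
     e1 \<bullet> e1 = 1 \<and> e2 \<bullet> e2 = 1 \<and> N \<bullet> N = 1 \<and>
     e1 \<bullet> e2 = 0 \<and> e1 \<bullet> N = 0 \<and> e2 \<bullet> N = 0 \<and>
     (\<exists>h :: real \<times> real \<Rightarrow> real.
        h (0, 0) = 0 \<and>
        (\<forall>\<^sub>F v in nhds (0, 0). p + fst v *\<^sub>R e1 + snd v *\<^sub>R e2 + h v *\<^sub>R N \<in> S) \<and>
        (\<lambda>(x, y). h (x, y) - (k/2 * (x^2 + y^2) + ca/6 * x^3 + cb/2 * x * y^2 + cc/6 * y^3))
          \<in> O[at (0, 0)](\<lambda>(x, y). (x^2 + y^2)^2))"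

definition Delta_G :: "real \<Rightarrow> real \<Rightarrow> real \<Rightarrow> real" where
  "Delta_G ca cb cc = 4 * cc^2 * (2*ca - cb)^2
     - (3 * cc^2 + (ca - 5*cb)^2) * (3 * (ca - 5*cb) * (ca - cb) + cc^2)"

definition Delta_P :: "real \<Rightarrow> real \<Rightarrow> real \<Rightarrow> real" where
  "Delta_P ca cb cc = 4 * cb * (ca - 2*cb)^3 - cc^2 * (ca - 2*cb)^2"

definition type_G1 :: "(real^3) set \<Rightarrow> real^3 \<Rightarrow> bool" where
  "type_G1 S p \<longleftrightarrow> (\<exists>e1 e2 N k ca cb cc. monge_chart S p e1 e2 N k ca cb cc \<and>
      k * cb * (cb - ca) \<noteq> 0 \<and> Delta_G ca cb cc > 0)"

definition type_D1 :: "(real^3) set \<Rightarrow> real^3 \<Rightarrow> bool" where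
  "type_D1 S p \<longleftrightarrow> (\<exists>e1 e2 N k ca cb cc. monge_chart S p e1 e2 N k ca cb cc \<and>
      cb * (cb - ca) \<noteq> 0 \<and> Delta_P ca cb cc > 0)"

end

theory Submission
  imports Defs
begin

text \<open>
  The Gauss map of the ellipsoid is the normalised gradient \<open>g\<close> of
  \<open>x\<^sup>2/a\<^sup>2 + y\<^sup>2/b\<^sup>2 + z\<^sup>2/c\<^sup>2\<close>, so its differential at \<open>p\<close> is the
  tangential part of \<open>diag (2/a\<^sup>2, 2/b\<^sup>2, 2/c\<^sup>2)\<close> divided by \<open>|g p|\<close>, and \<open>p\<close> is
  umbilic iff this diagonal form is a multiple of the inner product on the plane
  \<open>(g p)\<^sup>\<bottom>\<close>. As \<open>2/a\<^sup>2 < 2/b\<^sup>2 < 2/c\<^sup>2\<close>, this forces the multiple to be the middle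
  eigenvalue and the plane to contain the \<open>y\<close>-axis; hence \<open>y = 0\<close>, and together with
  the equation of the ellipsoid one gets
  \<open>x\<^sup>2 = a\<^sup>2(a\<^sup>2-b\<^sup>2)/(a\<^sup>2-c\<^sup>2)\<close>, \<open>z\<^sup>2 = c\<^sup>2(b\<^sup>2-c\<^sup>2)/(a\<^sup>2-c\<^sup>2)\<close>: four points.

  In an orthonormal frame at such a point whose second vector is the \<open>y\<close>-axis, the
  ellipsoid is the quadric \<open>A h\<^sup>2 + 2 (r + m X) h + K (X\<^sup>2 + Y\<^sup>2) = 0\<close> with
  \<open>K = 1/b\<^sup>2\<close> and \<open>m \<noteq> 0\<close>. Its small root \<open>h\<close> has the Monge expansion with
  \<open>k = -K/r\<close> and cubic coefficients \<open>(3t, t, 0)\<close>, \<open>t = K m / r\<^sup>2\<close>, for which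
  \<open>\<Delta>\<^sub>G = 48 t\<^sup>4 > 0\<close> and \<open>\<Delta>\<^sub>P = 4 t\<^sup>4 > 0\<close>.
\<close>

section \<open>Differential of a normalised vector field\<close>

lemma has_derivative_normalize:
  fixes f :: "'a::real_normed_vector \<Rightarrow> 'b::real_inner"
  assumes f: "(f has_derivative f') (at p)" and nz: "f p \<noteq> 0"
  shows "((\<lambda>q. (1 / norm (f q)) *\<^sub>R f q) has_derivative
           (\<lambda>v. (1 / norm (f p)) *\<^sub>R (f' v - ((f p \<bullet> f' v) / (norm (f p))\<^sup>2) *\<^sub>R f p))) (at p)"
proof -
  have norm_f: "((\<lambda>q. norm (f q)) has_derivative (\<lambda>v. f' v \<bullet> sgn (f p))) (at p)"
    using has_derivative_compose[OF f has_derivative_norm[OF nz]] .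
  have inv_norm_f: "((\<lambda>q. inverse (norm (f q))) has_derivative
      (\<lambda>v. - (inverse (norm (f p)) * (f' v \<bullet> sgn (f p)) * inverse (norm (f p))))) (at p)"
    using Deriv.has_derivative_inverse[OF _ norm_f] nz by simp
  show ?thesis
    using has_derivative_scaleR[OF inv_norm_f f] nz
    by (simp add: divide_inverse sgn_div_norm inner_commute power2_eq_square algebra_simps)
qed

lemma eq_projection_if_orthogonal_to_perp:
  fixes g u :: "'a::real_inner"
  assumes "g \<noteq> 0" and perp: "\<And>w. w \<bullet> g = 0 \<Longrightarrow> w \<bullet> u = 0"
  shows "u = ((u \<bullet> g) / (g \<bullet> g)) *\<^sub>R g"
proof -
  define w where "w = u - ((u \<bullet> g) / (g \<bullet> g)) *\<^sub>R g"
  have wg: "w \<bullet> g = 0"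
    using \<open>g \<noteq> 0\<close> by (simp add: w_def inner_diff_left)
  then have "w \<bullet> w = w \<bullet> u"
    by (simp add: w_def inner_diff_right)
  also have "\<dots> = 0" using perp[OF wg] .
  finally show ?thesis by (simp add: w_def)
qed

lemma normalized_derivative_scalar_on_perp_iff:
  fixes g :: "'a::real_inner" and A :: "'a \<Rightarrow> 'a"
  assumes "g \<noteq> 0"
  shows "(\<exists>l. \<forall>v. v \<bullet> g = 0 \<longrightarrow>
            (1 / norm g) *\<^sub>R (A v - ((g \<bullet> A v) / (norm g)\<^sup>2) *\<^sub>R g) = l *\<^sub>R v)
     \<longleftrightarrow> (\<exists>L. \<forall>v w. v \<bullet> g = 0 \<longrightarrow> w \<bullet> g = 0 \<longrightarrow> w \<bullet> A v = L * (w \<bullet> v))"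
proof
  assume "\<exists>l. \<forall>v. v \<bullet> g = 0 \<longrightarrow> (1 / norm g) *\<^sub>R (A v - ((g \<bullet> A v) / (norm g)\<^sup>2) *\<^sub>R g) = l *\<^sub>R v"
  then obtain l where l: "\<And>v. v \<bullet> g = 0 \<Longrightarrow>
      (1 / norm g) *\<^sub>R (A v - ((g \<bullet> A v) / (norm g)\<^sup>2) *\<^sub>R g) = l *\<^sub>R v" by blast
  have "w \<bullet> A v = (l * norm g) * (w \<bullet> v)" if "v \<bullet> g = 0" "w \<bullet> g = 0" for v w
  proof -
    have "w \<bullet> ((1 / norm g) *\<^sub>R (A v - ((g \<bullet> A v) / (norm g)\<^sup>2) *\<^sub>R g)) = l * (w \<bullet> v)"
      using l[OF that(1)] by simp
    then show ?thesis
      using that(2) \<open>g \<noteq> 0\<close> by (simp add: inner_diff_right field_simps)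
  qed
  then show "\<exists>L. \<forall>v w. v \<bullet> g = 0 \<longrightarrow> w \<bullet> g = 0 \<longrightarrow> w \<bullet> A v = L * (w \<bullet> v)" by blast
next
  assume "\<exists>L. \<forall>v w. v \<bullet> g = 0 \<longrightarrow> w \<bullet> g = 0 \<longrightarrow> w \<bullet> A v = L * (w \<bullet> v)"
  then obtain L where L: "\<And>v w. v \<bullet> g = 0 \<Longrightarrow> w \<bullet> g = 0 \<Longrightarrow> w \<bullet> A v = L * (w \<bullet> v)" by blast
  have "(1 / norm g) *\<^sub>R (A v - ((g \<bullet> A v) / (norm g)\<^sup>2) *\<^sub>R g) = (L / norm g) *\<^sub>R v"
    if v: "v \<bullet> g = 0" for v
  proof -
    define \<mu> where "\<mu> = ((A v - L *\<^sub>R v) \<bullet> g) / (g \<bullet> g)"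
    \<comment> \<open>\<open>A v - L v\<close> is orthogonal to the tangent space, hence normal.\<close>
    have Av: "A v = L *\<^sub>R v + \<mu> *\<^sub>R g"
      using eq_projection_if_orthogonal_to_perp[OF \<open>g \<noteq> 0\<close>, of "A v - L *\<^sub>R v"] L[OF v] v
      by (simp add: \<mu>_def algebra_simps)
    have "g \<bullet> A v = \<mu> * (norm g)\<^sup>2"
      using v by (simp add: Av inner_add_right inner_commute power2_norm_eq_inner)
    then show ?thesis
      using \<open>g \<noteq> 0\<close> by (simp add: Av)
  qed
  then show "\<exists>l. \<forall>v. v \<bullet> g = 0 \<longrightarrow> (1 / norm g) *\<^sub>R (A v - ((g \<bullet> A v) / (norm g)\<^sup>2) *\<^sub>R g) = l *\<^sub>R v"
    by blast
qed

lemma inner_linear_frame_expansion: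
  fixes T :: "'a::real_inner \<Rightarrow> 'a"
  assumes "linear T" and sym: "\<And>x y. x \<bullet> T y = y \<bullet> T x"
  shows "(x *\<^sub>R u + y *\<^sub>R v + z *\<^sub>R w) \<bullet> T (x *\<^sub>R u + y *\<^sub>R v + z *\<^sub>R w)
       = x\<^sup>2 * (u \<bullet> T u) + y\<^sup>2 * (v \<bullet> T v) + z\<^sup>2 * (w \<bullet> T w)
         + 2 * x * y * (u \<bullet> T v) + 2 * x * z * (u \<bullet> T w) + 2 * y * z * (v \<bullet> T w)"
  using sym[of v u] sym[of w u] sym[of w v]
  by (simp add: linear_add[OF assms(1)] linear_scale[OF assms(1)]
      power2_eq_square algebra_simps)

section \<open>Diagonal quadratic forms on a plane in \<open>\<real>\<^sup>3\<close>\<close>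

lemma inner_real3: "(x::real^3) \<bullet> y = x$1 * y$1 + x$2 * y$2 + x$3 * y$3"
  by (simp add: inner_vec_def sum_3)

lemma diagonal_form_vanishing_on_perp:
  fixes d1 d2 d3 :: real and g :: "real^3"
  assumes d: "d1 < d2" "d2 < d3" and "g \<noteq> 0"
    and form: "\<And>v w. v \<bullet> g = 0 \<Longrightarrow> w \<bullet> g = 0 \<Longrightarrow>
                 d1 * (w$1 * v$1) + d2 * (w$2 * v$2) + d3 * (w$3 * v$3) = 0"
  shows "g$2 = 0 \<and> d2 = 0"
proof -
  \<comment> \<open>The cross products \<open>g \<times> e\<^sub>i\<close>, which span \<open>g\<^sup>\<bottom>\<close>.\<close>
  define u1 u2 u3 :: "real^3"
    where "u1 = vector [0, g$3, - g$2]" and "u2 = vector [- g$3, 0, g$1]"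
      and "u3 = vector [g$2, - g$1, 0]"
  have perp: "u1 \<bullet> g = 0" "u2 \<bullet> g = 0" "u3 \<bullet> g = 0"
    by (simp_all add: u1_def u2_def u3_def inner_real3)
  have e11: "d2 * (g$3)\<^sup>2 + d3 * (g$2)\<^sup>2 = 0"
    using form[OF perp(1) perp(1)] by (simp add: u1_def power2_eq_square)
  have e33: "d1 * (g$2)\<^sup>2 + d2 * (g$1)\<^sup>2 = 0"
    using form[OF perp(3) perp(3)] by (simp add: u3_def power2_eq_square)
  have e12: "d3 * g$1 * g$2 = 0"
    using form[OF perp(2) perp(1)] by (auto simp: u1_def u2_def)
  have g2: "g$2 = 0"
  proof (rule ccontr)
    assume "g$2 \<noteq> 0"
    then have "(g$2)\<^sup>2 > 0" by simp
    show False
    proof (cases "d3 = 0")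
      case True
      then have "d1 * (g$2)\<^sup>2 + d2 * (g$1)\<^sup>2 < 0"
        using d \<open>(g$2)\<^sup>2 > 0\<close> by (intro add_neg_nonpos) (auto simp: mult_nonpos_nonneg mult_neg_pos)
      then show ?thesis using e33 by simp
    next
      case False
      then have "g$1 = 0" using e12 \<open>g$2 \<noteq> 0\<close> by simp
      then have "d1 = 0" using e33 \<open>g$2 \<noteq> 0\<close> by simp
      then have "d2 * (g$3)\<^sup>2 + d3 * (g$2)\<^sup>2 > 0"
        using d \<open>(g$2)\<^sup>2 > 0\<close> by (intro add_nonneg_pos) auto
      then show ?thesis using e11 by simp
    qed
  qed
  moreover have "d2 = 0"
  proof (rule ccontr)
    assume "d2 \<noteq> 0"
    then have "g$1 = 0" "g$3 = 0" using e11 e33 g2 by simp_all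
    with g2 \<open>g \<noteq> 0\<close> show False by (simp add: vec_eq_iff forall_3)
  qed
  ultimately show ?thesis ..
qed

lemma diagonal_form_eq_middle_on_perp:
  fixes l1 l2 l3 :: real and g v w :: "real^3"
  assumes "l1 \<noteq> l2" "g \<noteq> 0" "g$2 = 0"
    and rel: "(l1 - l2) * (g$3)\<^sup>2 + (l3 - l2) * (g$1)\<^sup>2 = 0"
    and v: "v \<bullet> g = 0" and w: "w \<bullet> g = 0"
  shows "l1 * (w$1 * v$1) + l2 * (w$2 * v$2) + l3 * (w$3 * v$3) = l2 * (w \<bullet> v)"
proof -
  have g1: "g$1 \<noteq> 0"
  proof
    assume "g$1 = 0"
    then have "g$3 = 0" using rel \<open>l1 \<noteq> l2\<close> by simp
    with \<open>g$1 = 0\<close> \<open>g$2 = 0\<close> \<open>g \<noteq> 0\<close> show False by (simp add: vec_eq_iff forall_3)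
  qed
  have v1: "v$1 * g$1 = - v$3 * g$3" and w1: "w$1 * g$1 = - w$3 * g$3"
    using v w \<open>g$2 = 0\<close> by (simp_all add: inner_real3 eq_neg_iff_add_eq_0)
  have "(g$1)\<^sup>2 * ((l1 - l2) * (w$1 * v$1) + (l3 - l2) * (w$3 * v$3))
      = (l1 - l2) * (w$1 * g$1) * (v$1 * g$1) + (l3 - l2) * (w$3 * v$3) * (g$1)\<^sup>2"
    by (simp add: power2_eq_square algebra_simps)
  also have "\<dots> = w$3 * v$3 * ((l1 - l2) * (g$3)\<^sup>2 + (l3 - l2) * (g$1)\<^sup>2)"
    unfolding v1 w1 by (simp add: power2_eq_square algebra_simps)
  finally have "(l1 - l2) * (w$1 * v$1) + (l3 - l2) * (w$3 * v$3) = 0"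
    using rel g1 by simp
  then show ?thesis by (simp add: inner_real3 algebra_simps)
qed

lemma diagonal_form_proportional_on_perp_iff:
  fixes l1 l2 l3 :: real and g :: "real^3"
  assumes l: "l1 < l2" "l2 < l3" and "g \<noteq> 0"
  shows "(\<exists>L. \<forall>v w. v \<bullet> g = 0 \<longrightarrow> w \<bullet> g = 0 \<longrightarrow>
            l1 * (w$1 * v$1) + l2 * (w$2 * v$2) + l3 * (w$3 * v$3) = L * (w \<bullet> v))
     \<longleftrightarrow> g$2 = 0 \<and> (l1 - l2) * (g$3)\<^sup>2 + (l3 - l2) * (g$1)\<^sup>2 = 0"
proof
  assume "\<exists>L. \<forall>v w. v \<bullet> g = 0 \<longrightarrow> w \<bullet> g = 0 \<longrightarrow>
            l1 * (w$1 * v$1) + l2 * (w$2 * v$2) + l3 * (w$3 * v$3) = L * (w \<bullet> v)"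
  then obtain L where L: "\<And>v w. v \<bullet> g = 0 \<Longrightarrow> w \<bullet> g = 0 \<Longrightarrow>
            l1 * (w$1 * v$1) + l2 * (w$2 * v$2) + l3 * (w$3 * v$3) = L * (w \<bullet> v)" by blast
  have "g$2 = 0 \<and> l2 - L = 0"
  proof (rule diagonal_form_vanishing_on_perp)
    show "(l1 - L) * (w$1 * v$1) + (l2 - L) * (w$2 * v$2) + (l3 - L) * (w$3 * v$3) = 0"
      if "v \<bullet> g = 0" "w \<bullet> g = 0" for v w
      using L[OF that] by (simp add: inner_real3 algebra_simps)
  qed (use l \<open>g \<noteq> 0\<close> in auto)
  moreover have "vector [- g$3, 0, g$1] \<bullet> g = 0"
    by (simp add: inner_real3)
  ultimately show "g$2 = 0 \<and> (l1 - l2) * (g$3)\<^sup>2 + (l3 - l2) * (g$1)\<^sup>2 = 0"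
    using L[of "vector [- g$3, 0, g$1]" "vector [- g$3, 0, g$1]"]
    by (simp add: inner_real3 power2_eq_square algebra_simps)
next
  assume "g$2 = 0 \<and> (l1 - l2) * (g$3)\<^sup>2 + (l3 - l2) * (g$1)\<^sup>2 = 0"
  then show "\<exists>L. \<forall>v w. v \<bullet> g = 0 \<longrightarrow> w \<bullet> g = 0 \<longrightarrow>
            l1 * (w$1 * v$1) + l2 * (w$2 * v$2) + l3 * (w$3 * v$3) = L * (w \<bullet> v)"
    using diagonal_form_eq_middle_on_perp[of l1 l2 g l3] l \<open>g \<noteq> 0\<close> by auto
qed

section \<open>Monge charts of quadric graphs\<close>

text \<open>The root \<open>(- w + sqrt (w\<^sup>2 - A C)) / A\<close> of \<open>A h\<^sup>2 + 2 w h + C = 0\<close> closest to \<open>0\<close>,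
  rationalised so that it stays valid for \<open>A = 0\<close>.\<close>

definition small_root :: "real \<Rightarrow> real \<Rightarrow> real \<Rightarrow> real" where
  "small_root A w C = - C / (w + sqrt (w\<^sup>2 - A * C))"

lemma small_root:
  assumes "w > 0" "A * C \<le> w\<^sup>2"
  shows small_root_eq: "A * (small_root A w C)\<^sup>2 + 2 * w * small_root A w C + C = 0"
    and abs_small_root_le: "\<bar>small_root A w C\<bar> \<le> \<bar>C\<bar> / w"
proof -
  define R where "R = sqrt (w\<^sup>2 - A * C)"
  have R: "R \<ge> 0" "R\<^sup>2 = w\<^sup>2 - A * C"
    using assms by (simp_all add: R_def)
  define den where "den = w + R"
  have den: "den \<ge> w" "den > 0"
    using R assms by (simp_all add: den_def)
  have h: "small_root A w C = - C / den"
    by (simp add: small_root_def den_def R_def)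
  have "den\<^sup>2 - 2 * w * den = - (A * C)"
    using R by (simp add: den_def power2_eq_square algebra_simps)
  then have "C * (A * C + den\<^sup>2 - 2 * w * den) = 0"
    by simp
  then show "A * (small_root A w C)\<^sup>2 + 2 * w * small_root A w C + C = 0"
    using den by (simp add: h field_simps power2_eq_square)
  show "\<bar>small_root A w C\<bar> \<le> \<bar>C\<bar> / w"
    using den assms by (simp add: h frac_le)
qed

lemma quadratic_root_expansion:
  fixes Aq K m r X s h :: real
  assumes r: "r > 0" and w: "r / 2 \<le> r + m * X" and X: "X\<^sup>2 \<le> s"
    and h: "\<bar>h\<bar> \<le> 2 * \<bar>K\<bar> * s / r"
    and root: "Aq * h\<^sup>2 + 2 * (r + m * X) * h + K * s = 0"
  shows "\<bar>h + K * s / (2 * r) - K * m / (2 * r\<^sup>2) * X * s\<bar>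
           \<le> (4 * \<bar>Aq\<bar> * K\<^sup>2 + \<bar>K\<bar> * m\<^sup>2) / r ^ 3 * s\<^sup>2"
proof -
  define f where "f = h + K * s / (2 * r) - K * m / (2 * r\<^sup>2) * X * s"
  have s: "s \<ge> 0" using X by (meson order_trans zero_le_power2)
  \<comment> \<open>Substituting the quadratic equation leaves only terms of order \<open>s\<^sup>2\<close>.\<close>
  have "2 * (r + m * X) * f = (Aq * h\<^sup>2 + 2 * (r + m * X) * h + K * s) - Aq * h\<^sup>2 - K * m\<^sup>2 * X\<^sup>2 * s / r\<^sup>2"
    using r by (simp add: f_def field_simps power2_eq_square)
  then have f: "2 * (r + m * X) * f = - (Aq * h\<^sup>2 + K * m\<^sup>2 * X\<^sup>2 * s / r\<^sup>2)"
    using root by simp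
  have "\<bar>f\<bar> * r \<le> \<bar>f\<bar> * (2 * (r + m * X))"
    using w by (intro mult_left_mono) auto
  also have "\<dots> = \<bar>2 * (r + m * X) * f\<bar>"
    using w r by (simp add: abs_mult)
  also have "\<dots> \<le> \<bar>Aq * h\<^sup>2\<bar> + \<bar>K * m\<^sup>2 * X\<^sup>2 * s / r\<^sup>2\<bar>"
    unfolding f abs_minus_cancel by (rule abs_triangle_ineq)
  also have "\<dots> = \<bar>Aq\<bar> * h\<^sup>2 + \<bar>K\<bar> * m\<^sup>2 * X\<^sup>2 * s / r\<^sup>2"
    using s by (simp add: abs_mult)
  also have "\<dots> \<le> \<bar>Aq\<bar> * (2 * \<bar>K\<bar> * s / r)\<^sup>2 + \<bar>K\<bar> * m\<^sup>2 * s * s / r\<^sup>2"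
  proof (intro add_mono mult_left_mono divide_right_mono)
    show "h\<^sup>2 \<le> (2 * \<bar>K\<bar> * s / r)\<^sup>2"
      using h by (metis abs_ge_zero power2_abs power_mono)
    show "\<bar>K\<bar> * m\<^sup>2 * X\<^sup>2 * s \<le> \<bar>K\<bar> * m\<^sup>2 * s * s"
      using X s by (intro mult_right_mono mult_left_mono) auto
  qed auto
  also have "\<dots> = (4 * \<bar>Aq\<bar> * K\<^sup>2 + \<bar>K\<bar> * m\<^sup>2) / r ^ 3 * s\<^sup>2 * r"
    using r by (simp add: field_simps power2_eq_square power3_eq_cube)
  finally show ?thesis
    using r unfolding f_def by (simp only: mult_le_cancel_right_pos)
qed

lemma small_root_expansion:
  fixes Aq K m r X s :: real
  assumes r: "r > 0" and mX: "\<bar>m * X\<bar> < r / 2" and AK: "\<bar>Aq * K\<bar> * s < r\<^sup>2 / 4" and X: "X\<^sup>2 \<le> s"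
  defines "h \<equiv> small_root Aq (r + m * X) (K * s)"
  shows "Aq * h\<^sup>2 + 2 * (r + m * X) * h + K * s = 0"
    and "\<bar>h + K * s / (2 * r) - K * m / (2 * r\<^sup>2) * X * s\<bar>
           \<le> (4 * \<bar>Aq\<bar> * K\<^sup>2 + \<bar>K\<bar> * m\<^sup>2) / r ^ 3 * s\<^sup>2"
proof -
  have w: "r / 2 \<le> r + m * X" using mX by linarith
  have s: "s \<ge> 0" using X by (meson order_trans zero_le_power2)
  have "Aq * (K * s) \<le> \<bar>Aq * K\<bar> * s"
    using s by (metis abs_ge_self mult.assoc mult_right_mono)
  also have "\<dots> \<le> (r / 2)\<^sup>2"
    using AK by (simp add: power_divide)
  also have "\<dots> \<le> (r + m * X)\<^sup>2" using w r by (intro power_mono) auto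
  finally have disc: "Aq * (K * s) \<le> (r + m * X)\<^sup>2" .
  have wpos: "r + m * X > 0" using w r by linarith
  show root: "Aq * h\<^sup>2 + 2 * (r + m * X) * h + K * s = 0"
    using small_root_eq[OF wpos disc] by (simp add: h_def)
  have "\<bar>h\<bar> \<le> \<bar>K * s\<bar> / (r + m * X)"
    using abs_small_root_le[OF wpos disc] by (simp add: h_def)
  also have "\<dots> \<le> \<bar>K * s\<bar> / (r / 2)"
    using w r by (intro divide_left_mono) auto
  also have "\<dots> = 2 * \<bar>K\<bar> * s / r"
    using s by (simp add: abs_mult)
  finally show "\<bar>h + K * s / (2 * r) - K * m / (2 * r\<^sup>2) * X * s\<bar>
           \<le> (4 * \<bar>Aq\<bar> * K\<^sup>2 + \<bar>K\<bar> * m\<^sup>2) / r ^ 3 * s\<^sup>2"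
    using quadratic_root_expansion[OF r w X _ root] by simp
qed

lemma eventually_nhds_of_continuous_zero:
  fixes f :: "'a::t2_space \<Rightarrow> real"
  assumes "isCont f x" "f x = 0" "\<epsilon> > 0"
  shows "\<forall>\<^sub>F y in nhds x. f y < \<epsilon>"
proof -
  have "(f \<longlongrightarrow> f x) (nhds x)"
    using assms(1) by (simp add: isCont_def tendsto_at_iff_tendsto_nhds)
  then show ?thesis
    using order_tendstoD(2)[of f "f x" "nhds x" \<epsilon>] assms(2,3) by simp
qed

lemma monge_chart_of_quadric_graph:
  fixes S :: "(real^3) set" and p e1 e2 N :: "real^3" and Aq r m K :: real
  assumes "p \<in> S"
    and frame: "e1 \<bullet> e1 = 1" "e2 \<bullet> e2 = 1" "N \<bullet> N = 1" "e1 \<bullet> e2 = 0" "e1 \<bullet> N = 0" "e2 \<bullet> N = 0"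
    and r: "r > 0"
    and graph: "\<And>X Y h. Aq * h\<^sup>2 + 2 * (r + m * X) * h + K * (X\<^sup>2 + Y\<^sup>2) = 0 \<Longrightarrow>
                  p + X *\<^sub>R e1 + Y *\<^sub>R e2 + h *\<^sub>R N \<in> S"
  shows "monge_chart S p e1 e2 N (- K / r) (3 * K * m / r\<^sup>2) (K * m / r\<^sup>2) 0"
proof -
  define s where "s v = (fst v)\<^sup>2 + (snd v)\<^sup>2" for v :: "real \<times> real"
  define h where "h v = small_root Aq (r + m * fst v) (K * s v)" for v
  define M where "M = (4 * \<bar>Aq\<bar> * K\<^sup>2 + \<bar>K\<bar> * m\<^sup>2) / r ^ 3"
  have small: "\<forall>\<^sub>F v in nhds (0, 0). \<bar>m * fst v\<bar> < r / 2 \<and> \<bar>Aq * K\<bar> * s v < r\<^sup>2 / 4"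
    using r unfolding s_def
    by (intro eventually_conj eventually_nhds_of_continuous_zero continuous_intros) auto
  have near_root: "Aq * (h v)\<^sup>2 + 2 * (r + m * fst v) * h v + K * s v = 0 \<and>
               \<bar>h v + K * s v / (2 * r) - K * m / (2 * r\<^sup>2) * fst v * s v\<bar> \<le> M * (s v)\<^sup>2"
    if "\<bar>m * fst v\<bar> < r / 2" "\<bar>Aq * K\<bar> * s v < r\<^sup>2 / 4" for v
    using small_root_expansion[OF r that] by (simp add: h_def M_def s_def)
  have "\<forall>\<^sub>F v in nhds (0, 0). p + fst v *\<^sub>R e1 + snd v *\<^sub>R e2 + h v *\<^sub>R N \<in> S"
    using small by eventually_elim (use near_root graph in \<open>auto simp: s_def\<close>)
  moreover have "(\<lambda>(x, y). h (x, y) - (- K / r / 2 * (x\<^sup>2 + y\<^sup>2) + 3 * K * m / r\<^sup>2 / 6 * x ^ 3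
                    + K * m / r\<^sup>2 / 2 * x * y\<^sup>2 + 0 / 6 * y ^ 3))
             \<in> O[at (0, 0)](\<lambda>(x, y). (x\<^sup>2 + y\<^sup>2)\<^sup>2)"
  proof (rule bigoI[where c = M])
    have "\<forall>\<^sub>F v in nhds (0, 0).
            \<bar>h v + K * s v / (2 * r) - K * m / (2 * r\<^sup>2) * fst v * s v\<bar> \<le> M * (s v)\<^sup>2"
      using small by eventually_elim (use near_root in blast)
    then show "\<forall>\<^sub>F v in at (0, 0).
        norm ((\<lambda>(x, y). h (x, y) - (- K / r / 2 * (x\<^sup>2 + y\<^sup>2) + 3 * K * m / r\<^sup>2 / 6 * x ^ 3
                    + K * m / r\<^sup>2 / 2 * x * y\<^sup>2 + 0 / 6 * y ^ 3)) v)
          \<le> M * norm ((\<lambda>(x, y). (x\<^sup>2 + y\<^sup>2)\<^sup>2) v)"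
      unfolding eventually_at_filter
    proof eventually_elim
      case (elim v)
      obtain x y where v: "v = (x, y)" by fastforce
      have eq: "h (x, y) - (- K / r / 2 * (x\<^sup>2 + y\<^sup>2) + 3 * K * m / r\<^sup>2 / 6 * x ^ 3
                    + K * m / r\<^sup>2 / 2 * x * y\<^sup>2 + 0 / 6 * y ^ 3)
          = h (x, y) + K * s (x, y) / (2 * r) - K * m / (2 * r\<^sup>2) * x * s (x, y)"
        using r by (simp add: s_def power2_eq_square power3_eq_cube field_simps)
      have "\<bar>h (x, y) + K * s (x, y) / (2 * r) - K * m / (2 * r\<^sup>2) * x * s (x, y)\<bar>
              \<le> M * (s (x, y))\<^sup>2"
        using elim by (simp add: v)
      then show ?case
        unfolding v prod.case eq by (simp add: s_def)
    qed
  qed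
  moreover have "h (0, 0) = 0" by (simp add: h_def s_def small_root_def)
  ultimately show ?thesis
    unfolding monge_chart_def using \<open>p \<in> S\<close> frame by blast
qed

lemma type_G1I:
  assumes "monge_chart S p e1 e2 N k (3 * t) t 0" "k \<noteq> 0" "t \<noteq> 0"
  shows "type_G1 S p"
proof -
  have "Delta_G (3 * t) t 0 = 48 * t ^ 4"
    by (simp add: Delta_G_def power2_eq_square power4_eq_xxxx algebra_simps)
  then have "k * t * (t - 3 * t) \<noteq> 0 \<and> Delta_G (3 * t) t 0 > 0"
    using assms(2,3) by simp
  then show ?thesis
    unfolding type_G1_def using assms(1) by blast
qed

lemma type_D1I:
  assumes "monge_chart S p e1 e2 N k (3 * t) t 0" "t \<noteq> 0"
  shows "type_D1 S p"
proof -
  have "Delta_P (3 * t) t 0 = 4 * t ^ 4"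
    by (simp add: Delta_P_def power2_eq_square power3_eq_cube power4_eq_xxxx algebra_simps)
  then have "t * (t - 3 * t) \<noteq> 0 \<and> Delta_P (3 * t) t 0 > 0"
    using assms(2) by simp
  then show ?thesis
    unfolding type_D1_def using assms(1) by blast
qed

section \<open>Umbilics of the ellipsoid\<close>

lemma ell_grad_nth [simp]:
  "ell_grad a b c v $ 1 = 2 * v$1 / a\<^sup>2"
  "ell_grad a b c v $ 2 = 2 * v$2 / b\<^sup>2"
  "ell_grad a b c v $ 3 = 2 * v$3 / c\<^sup>2"
  by (simp_all add: ell_grad_def)

lemma linear_ell_grad: "linear (ell_grad a b c)"
  by (rule linearI) (simp_all add: vec_eq_iff forall_3 add_divide_distrib algebra_simps)

lemma has_derivative_ell_grad: "(ell_grad a b c has_derivative ell_grad a b c) (at p)"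
  using linear_ell_grad linear_imp_has_derivative by blast

lemma inner_ell_grad:
  "w \<bullet> ell_grad a b c v = 2/a\<^sup>2 * (w$1 * v$1) + 2/b\<^sup>2 * (w$2 * v$2) + 2/c\<^sup>2 * (w$3 * v$3)"
  by (simp add: inner_real3 algebra_simps)

lemma inner_ell_grad_commute: "u \<bullet> ell_grad a b c v = v \<bullet> ell_grad a b c u"
  by (simp add: inner_ell_grad mult.commute)

lemma ell_grad_nonzero:
  assumes "p \<in> ellipsoid a b c"
  shows "ell_grad a b c p \<noteq> 0"
proof
  assume "ell_grad a b c p = 0"
  then have "(p$1)\<^sup>2 / a\<^sup>2 = 0 \<and> (p$2)\<^sup>2 / b\<^sup>2 = 0 \<and> (p$3)\<^sup>2 / c\<^sup>2 = 0"
    by (simp add: vec_eq_iff forall_3)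
  with assms show False
    by (simp add: ellipsoid_def)
qed

lemma add_mem_ellipsoid_iff:
  assumes "p \<in> ellipsoid a b c"
  shows "p + u \<in> ellipsoid a b c \<longleftrightarrow> u \<bullet> ell_grad a b c p + (u \<bullet> ell_grad a b c u) / 2 = 0"
proof -
  have "((p + u)$1)\<^sup>2 / a\<^sup>2 + ((p + u)$2)\<^sup>2 / b\<^sup>2 + ((p + u)$3)\<^sup>2 / c\<^sup>2
      = ((p$1)\<^sup>2 / a\<^sup>2 + (p$2)\<^sup>2 / b\<^sup>2 + (p$3)\<^sup>2 / c\<^sup>2)
        + (u \<bullet> ell_grad a b c p + (u \<bullet> ell_grad a b c u) / 2)"
    by (simp add: inner_ell_grad power2_sum power2_eq_square add_divide_distrib algebra_simps)
  then show ?thesis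
    using assms by (simp add: ellipsoid_def)
qed

lemma ell_axes_order:
  fixes a b c :: real
  assumes "a > b" "b > c" "c > 0"
  shows "2/a\<^sup>2 < 2/b\<^sup>2" "2/b\<^sup>2 < 2/c\<^sup>2"
  using assms by (auto simp: divide_strict_left_mono power_strict_mono)

lemma ell_umbilic_iff_second_form:
  "ell_umbilic a b c p \<longleftrightarrow> p \<in> ellipsoid a b c \<and>
     (\<exists>L. \<forall>v w. v \<bullet> ell_grad a b c p = 0 \<longrightarrow> w \<bullet> ell_grad a b c p = 0 \<longrightarrow>
            w \<bullet> ell_grad a b c v = L * (w \<bullet> v))"
proof (cases "p \<in> ellipsoid a b c")
  case True
  let ?g = "ell_grad a b c p"
  have g: "?g \<noteq> 0" using ell_grad_nonzero[OF True] .
  define D where "D v = (1 / norm ?g) *\<^sub>R (ell_grad a b c v - ((?g \<bullet> ell_grad a b c v) / (norm ?g)\<^sup>2) *\<^sub>R ?g)"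
    for v
  have dN: "(ell_normal a b c has_derivative D) (at p)"
    unfolding ell_normal_def D_def using has_derivative_normalize[OF has_derivative_ell_grad g] .
  have tangent: "v \<bullet> ell_normal a b c p = 0 \<longleftrightarrow> v \<bullet> ?g = 0" for v
    using g by (simp add: ell_normal_def)
  have "(\<exists>D' l. (ell_normal a b c has_derivative D') (at p) \<and>
                 (\<forall>v. v \<bullet> ell_normal a b c p = 0 \<longrightarrow> D' v = l *\<^sub>R v))
         \<longleftrightarrow> (\<exists>l. \<forall>v. v \<bullet> ?g = 0 \<longrightarrow> D v = l *\<^sub>R v)"
    using has_derivative_unique[OF _ dN] dN unfolding tangent by metis
  then show ?thesis
    unfolding ell_umbilic_def D_def normalized_derivative_scalar_on_perp_iff[OF g] using True by blast
qed (simp add: ell_umbilic_def)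

lemma ell_umbilic_iff_normal:
  fixes a b c :: real
  assumes "a > b" "b > c" "c > 0"
  shows "ell_umbilic a b c p \<longleftrightarrow> p \<in> ellipsoid a b c \<and> ell_grad a b c p $ 2 = 0 \<and>
     (2/a\<^sup>2 - 2/b\<^sup>2) * (ell_grad a b c p $ 3)\<^sup>2 + (2/c\<^sup>2 - 2/b\<^sup>2) * (ell_grad a b c p $ 1)\<^sup>2 = 0"
  using diagonal_form_proportional_on_perp_iff[OF ell_axes_order[OF assms] ell_grad_nonzero]
  unfolding ell_umbilic_iff_second_form inner_ell_grad by blast

lemma ell_umbilic_second_form:
  fixes a b c :: real
  assumes "a > b" "b > c" "c > 0" and "ell_umbilic a b c p"
    and "v \<bullet> ell_grad a b c p = 0" "w \<bullet> ell_grad a b c p = 0"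
  shows "w \<bullet> ell_grad a b c v = 2/b\<^sup>2 * (w \<bullet> v)"
  using diagonal_form_eq_middle_on_perp[of "2/a\<^sup>2" "2/b\<^sup>2" "ell_grad a b c p" "2/c\<^sup>2" v w]
    assms ell_axes_order[OF assms(1-3)] ell_umbilic_iff_normal[OF assms(1-3)] ell_grad_nonzero
  unfolding inner_ell_grad by auto

lemma linear_system_sum_one_iff:
  fixes U W \<alpha> \<beta> \<gamma> :: real
  assumes "\<alpha> \<noteq> \<gamma>"
  shows "U + W = 1 \<and> (\<beta> - \<alpha>) * W + (\<beta> - \<gamma>) * U = 0 \<longleftrightarrow>
         U = (\<alpha> - \<beta>) / (\<alpha> - \<gamma>) \<and> W = (\<beta> - \<gamma>) / (\<alpha> - \<gamma>)"
proof -
  have "\<alpha> - \<gamma> \<noteq> 0" using assms by simp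
  show ?thesis
  proof
    assume h: "U + W = 1 \<and> (\<beta> - \<alpha>) * W + (\<beta> - \<gamma>) * U = 0"
    then have "W = 1 - U" by simp
    with h have "U * (\<alpha> - \<gamma>) = \<alpha> - \<beta>" by (simp add: algebra_simps)
    then have U: "U = (\<alpha> - \<beta>) / (\<alpha> - \<gamma>)"
      using \<open>\<alpha> - \<gamma> \<noteq> 0\<close> by (simp add: field_simps)
    have "W = 1 - (\<alpha> - \<beta>) / (\<alpha> - \<gamma>)" using U \<open>W = 1 - U\<close> by simp
    also have "\<dots> = (\<beta> - \<gamma>) / (\<alpha> - \<gamma>)" using \<open>\<alpha> - \<gamma> \<noteq> 0\<close> by (simp add: field_simps)
    finally have "W = (\<beta> - \<gamma>) / (\<alpha> - \<gamma>)" .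
    with U show "U = (\<alpha> - \<beta>) / (\<alpha> - \<gamma>) \<and> W = (\<beta> - \<gamma>) / (\<alpha> - \<gamma>)" ..
  next
    assume "U = (\<alpha> - \<beta>) / (\<alpha> - \<gamma>) \<and> W = (\<beta> - \<gamma>) / (\<alpha> - \<gamma>)"
    then have U: "U = (\<alpha> - \<beta>) / (\<alpha> - \<gamma>)" and W: "W = (\<beta> - \<gamma>) / (\<alpha> - \<gamma>)" by simp_all
    show "U + W = 1 \<and> (\<beta> - \<alpha>) * W + (\<beta> - \<gamma>) * U = 0"
    proof
      show "U + W = 1"
        using \<open>\<alpha> - \<gamma> \<noteq> 0\<close> unfolding U W add_divide_distrib[symmetric] by simp
      show "(\<beta> - \<alpha>) * W + (\<beta> - \<gamma>) * U = 0"
        unfolding U W by (simp add: add_divide_distrib[symmetric] algebra_simps)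
    qed
  qed
qed

lemma ell_umbilic_iff:
  fixes a b c :: real
  assumes "a > b" "b > c" "c > 0"
  shows "ell_umbilic a b c p \<longleftrightarrow> p$2 = 0 \<and>
           (p$1)\<^sup>2 = a\<^sup>2 * (a\<^sup>2 - b\<^sup>2) / (a\<^sup>2 - c\<^sup>2) \<and> (p$3)\<^sup>2 = c\<^sup>2 * (b\<^sup>2 - c\<^sup>2) / (a\<^sup>2 - c\<^sup>2)"
proof -
  have ac: "a\<^sup>2 \<noteq> c\<^sup>2" using assms by (metis less_trans order_less_irrefl power2_eq_iff_nonneg less_imp_le)
  define U W where "U = (p$1)\<^sup>2 / a\<^sup>2" and "W = (p$3)\<^sup>2 / c\<^sup>2"
  have "(2/a\<^sup>2 - 2/b\<^sup>2) * (2 * p$3 / c\<^sup>2)\<^sup>2 + (2/c\<^sup>2 - 2/b\<^sup>2) * (2 * p$1 / a\<^sup>2)\<^sup>2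
      = 8 / (a\<^sup>2 * b\<^sup>2 * c\<^sup>2) * ((b\<^sup>2 - a\<^sup>2) * W + (b\<^sup>2 - c\<^sup>2) * U)"
    using assms by (simp add: U_def W_def field_simps power2_eq_square)
  then have "ell_umbilic a b c p \<longleftrightarrow> p$2 = 0 \<and> U + W = 1 \<and> (b\<^sup>2 - a\<^sup>2) * W + (b\<^sup>2 - c\<^sup>2) * U = 0"
    using assms by (auto simp: ell_umbilic_iff_normal ellipsoid_def U_def W_def)
  also have "\<dots> \<longleftrightarrow> p$2 = 0 \<and> U = (a\<^sup>2 - b\<^sup>2) / (a\<^sup>2 - c\<^sup>2) \<and> W = (b\<^sup>2 - c\<^sup>2) / (a\<^sup>2 - c\<^sup>2)"
    using linear_system_sum_one_iff[OF ac] by simp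
  finally show ?thesis
    using assms by (auto simp: U_def W_def field_simps)
qed

lemma ell_umbilic_coordinates_pos:
  fixes a b c :: real
  assumes "a > b" "b > c" "c > 0"
  shows "a\<^sup>2 * (a\<^sup>2 - b\<^sup>2) / (a\<^sup>2 - c\<^sup>2) > 0" "c\<^sup>2 * (b\<^sup>2 - c\<^sup>2) / (a\<^sup>2 - c\<^sup>2) > 0"
proof -
  have "a\<^sup>2 > b\<^sup>2" "b\<^sup>2 > c\<^sup>2" "c\<^sup>2 > 0" using assms by (auto intro: power_strict_mono)
  then show "a\<^sup>2 * (a\<^sup>2 - b\<^sup>2) / (a\<^sup>2 - c\<^sup>2) > 0" "c\<^sup>2 * (b\<^sup>2 - c\<^sup>2) / (a\<^sup>2 - c\<^sup>2) > 0"
    by (auto intro!: divide_pos_pos mult_pos_pos)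
qed

lemma ell_umbilics_eq:
  fixes a b c :: real
  assumes "a > b" "b > c" "c > 0"
  defines "x0 \<equiv> sqrt (a\<^sup>2 * (a\<^sup>2 - b\<^sup>2) / (a\<^sup>2 - c\<^sup>2))" and "z0 \<equiv> sqrt (c\<^sup>2 * (b\<^sup>2 - c\<^sup>2) / (a\<^sup>2 - c\<^sup>2))"
  shows "{p. ell_umbilic a b c p} =
           {vector [x0, 0, z0], vector [x0, 0, - z0], vector [- x0, 0, z0], vector [- x0, 0, - z0]}"
proof (rule set_eqI)
  fix p :: "real^3"
  have "ell_umbilic a b c p \<longleftrightarrow> p$2 = 0 \<and> (p$1)\<^sup>2 = x0\<^sup>2 \<and> (p$3)\<^sup>2 = z0\<^sup>2"
    using ell_umbilic_iff[OF assms(1-3)] ell_umbilic_coordinates_pos[OF assms(1-3)]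
    by (simp add: x0_def z0_def)
  moreover have "p = vector [p$1, p$2, p$3]"
    by (simp add: vec_eq_iff forall_3)
  ultimately show "p \<in> {p. ell_umbilic a b c p} \<longleftrightarrow>
      p \<in> {vector [x0, 0, z0], vector [x0, 0, - z0], vector [- x0, 0, z0], vector [- x0, 0, - z0]}"
    unfolding mem_Collect_eq power2_eq_iff by (metis (no_types, lifting) insert_iff singletonD vector_3)
qed

lemma card_ell_umbilics:
  fixes a b c :: real
  assumes "a > b" "b > c" "c > 0"
  shows "finite {p. ell_umbilic a b c p}" "card {p. ell_umbilic a b c p} = 4"
proof -
  define x0 z0 where "x0 = sqrt (a\<^sup>2 * (a\<^sup>2 - b\<^sup>2) / (a\<^sup>2 - c\<^sup>2))"
    and "z0 = sqrt (c\<^sup>2 * (b\<^sup>2 - c\<^sup>2) / (a\<^sup>2 - c\<^sup>2))"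
  have "x0 > 0" "z0 > 0"
    using ell_umbilic_coordinates_pos[OF assms] by (simp_all add: x0_def z0_def)
  moreover have "{p. ell_umbilic a b c p} =
           {vector [x0, 0, z0], vector [x0, 0, - z0], vector [- x0, 0, z0], vector [- x0, 0, - z0]}"
    using ell_umbilics_eq[OF assms] by (simp add: x0_def z0_def)
  ultimately show "finite {p. ell_umbilic a b c p}" "card {p. ell_umbilic a b c p} = 4"
    by (simp_all add: vec_eq_iff forall_3)
qed

lemma ellipsoid_quadric_graph_in_frame:
  fixes e1 e2 N :: "real^3"
  assumes "p \<in> ellipsoid a b c"
    and frame: "N \<bullet> N = 1" "e1 \<bullet> N = 0" "e2 \<bullet> N = 0"
    and normal: "ell_grad a b c p = (2 * r) *\<^sub>R N"
    and second: "e1 \<bullet> ell_grad a b c e1 = 2 * K" "e2 \<bullet> ell_grad a b c e2 = 2 * K"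
      "e1 \<bullet> ell_grad a b c e2 = 0" "e2 \<bullet> ell_grad a b c N = 0"
  defines "Aq \<equiv> (N \<bullet> ell_grad a b c N) / 2" and "m \<equiv> (e1 \<bullet> ell_grad a b c N) / 2"
  assumes quadric: "Aq * h\<^sup>2 + 2 * (r + m * X) * h + K * (X\<^sup>2 + Y\<^sup>2) = 0"
  shows "p + X *\<^sub>R e1 + Y *\<^sub>R e2 + h *\<^sub>R N \<in> ellipsoid a b c"
proof -
  define u where "u = X *\<^sub>R e1 + Y *\<^sub>R e2 + h *\<^sub>R N"
  have "u \<bullet> ell_grad a b c u = 2 * (Aq * h\<^sup>2 + 2 * m * X * h + K * (X\<^sup>2 + Y\<^sup>2))"
    using inner_linear_frame_expansion[OF linear_ell_grad inner_ell_grad_commute] second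
    by (simp add: u_def Aq_def m_def algebra_simps)
  moreover have "u \<bullet> ell_grad a b c p = 2 * r * h"
    using frame by (simp add: u_def normal inner_add_left)
  ultimately have "u \<bullet> ell_grad a b c p + (u \<bullet> ell_grad a b c u) / 2
      = Aq * h\<^sup>2 + 2 * (r + m * X) * h + K * (X\<^sup>2 + Y\<^sup>2)"
    by (simp add: algebra_simps)
  then show ?thesis
    using add_mem_ellipsoid_iff[OF \<open>p \<in> ellipsoid a b c\<close>, of u] quadric
    by (simp add: u_def add.assoc)
qed

lemma ell_umbilic_monge_chart:
  fixes a b c :: real
  assumes abc: "a > b" "b > c" "c > 0" and umb: "ell_umbilic a b c p"
  obtains e1 e2 N k t where "monge_chart (ellipsoid a b c) p e1 e2 N k (3 * t) t 0" "k \<noteq> 0" "t \<noteq> 0"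
proof -
  let ?G = "ell_grad a b c"
  define g where "g = ?G p"
  have pE: "p \<in> ellipsoid a b c" using umb by (simp add: ell_umbilic_def)
  have "(p$1)\<^sup>2 > 0" "(p$3)\<^sup>2 > 0" "p$2 = 0"
    using ell_umbilic_iff[OF abc] ell_umbilic_coordinates_pos[OF abc] umb by auto
  then have g: "g$1 \<noteq> 0" "g$2 = 0" "g$3 \<noteq> 0" using abc by (auto simp: g_def)
  then have "g \<noteq> 0" by auto
  define r where "r = norm g / 2"
  define N where "N = (1 / norm g) *\<^sub>R g"
  define e1 :: "real^3" where "e1 = vector [- N$3, 0, N$1]"
  define e2 :: "real^3" where "e2 = vector [0, 1, 0]"
  define Aq m K where "Aq = (N \<bullet> ?G N) / 2" and "m = (e1 \<bullet> ?G N) / 2" and "K = 1 / b\<^sup>2"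
  have r: "r > 0" using \<open>g \<noteq> 0\<close> by (simp add: r_def)
  have gN: "g = (2 * r) *\<^sub>R N" using \<open>g \<noteq> 0\<close> by (simp add: r_def N_def)
  have N: "N \<bullet> N = 1" "N$1 \<noteq> 0" "N$2 = 0" "N$3 \<noteq> 0"
    using \<open>g \<noteq> 0\<close> g by (simp_all add: N_def power2_norm_eq_inner[symmetric] power2_eq_square)
  have frame: "e1 \<bullet> e1 = 1" "e2 \<bullet> e2 = 1" "N \<bullet> N = 1" "e1 \<bullet> e2 = 0" "e1 \<bullet> N = 0" "e2 \<bullet> N = 0"
    using N by (simp_all add: e1_def e2_def inner_real3 algebra_simps)
  have tangent: "e1 \<bullet> g = 0" "e2 \<bullet> g = 0"
    using frame by (simp_all add: gN)
  have second_form: "w \<bullet> ?G v = 2 * K * (w \<bullet> v)" if "v \<bullet> g = 0" "w \<bullet> g = 0" for v w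
    using ell_umbilic_second_form[OF abc umb] that by (simp add: g_def K_def)
  have "e2 \<bullet> ?G N = 0"
    using N by (simp add: inner_ell_grad e2_def)
  then have "p + X *\<^sub>R e1 + Y *\<^sub>R e2 + h *\<^sub>R N \<in> ellipsoid a b c"
    if "Aq * h\<^sup>2 + 2 * (r + m * X) * h + K * (X\<^sup>2 + Y\<^sup>2) = 0" for X Y h
    using ellipsoid_quadric_graph_in_frame[OF pE N(1) frame(5,6) gN[unfolded g_def]]
      second_form[OF tangent(1) tangent(1)] second_form[OF tangent(2) tangent(2)]
      second_form[OF tangent(2) tangent(1)] frame that
    by (simp add: Aq_def m_def)
  then have "monge_chart (ellipsoid a b c) p e1 e2 N (- K / r) (3 * K * m / r\<^sup>2) (K * m / r\<^sup>2) 0"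
    by (rule monge_chart_of_quadric_graph[OF pE frame r])
  then have chart: "monge_chart (ellipsoid a b c) p e1 e2 N (- K / r) (3 * (K * m / r\<^sup>2)) (K * m / r\<^sup>2) 0"
    by (simp add: mult.assoc)
  have "m = N$1 * N$3 * (1 / c\<^sup>2 - 1 / a\<^sup>2)"
    by (simp add: m_def e1_def inner_ell_grad field_simps)
  then have "m \<noteq> 0"
    using N abc power_strict_mono[of c a 2] by auto
  moreover have "K \<noteq> 0" using abc by (simp add: K_def)
  ultimately show ?thesis
    using that[OF chart] r by simp
qed

theorem proposition7:
  fixes a b c :: real
  assumes "a > b" and "b > c" and "c > 0"
  shows "finite {p. ell_umbilic a b c p} \<and> card {p. ell_umbilic a b c p} = 4 \<and>
         (\<forall>p. ell_umbilic a b c p \<longrightarrow>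
            p$2 = 0 \<and> type_G1 (ellipsoid a b c) p \<and> type_D1 (ellipsoid a b c) p)"
proof -
  have "p$2 = 0 \<and> type_G1 (ellipsoid a b c) p \<and> type_D1 (ellipsoid a b c) p"
    if umb: "ell_umbilic a b c p" for p
  proof -
    obtain e1 e2 N k t where "monge_chart (ellipsoid a b c) p e1 e2 N k (3 * t) t 0" "k \<noteq> 0" "t \<noteq> 0"
      using ell_umbilic_monge_chart[OF assms umb] .
    then show ?thesis
      using ell_umbilic_iff[OF assms] umb type_G1I type_D1I by blast
  qed
  then show ?thesis
    using card_ell_umbilics[OF assms] by blast
qed

end
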